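(* Let $k$ be an algebraically closed field of characteristic $p>0$, and let $f:\mathbb A^n_k\to\mathbb A^n_k$ be a homomorphism of algebraic groups $\mathbb G_a^n\to\mathbb G_a^n$, given by additive polynomials \[ f_j(x_1,\dots,x_n)=\sum_{i=1}^n\sum_{\ell=0}^{N_j}a_{j,i,\ell}\,x_i^{p^\ell},\qquad 1\le j\le n. \] Assume $f$ is finite and bijective on $k$-points (equivalently, $f$ is a finite radicial isogeny of $\mathbb G_a^n$). Then for every $k$-linear subspace $W\subset\mathbb A^n_k$, the reduced inverse image satisfies $f^{-1}(W)_{\mathrm{red}}\cong\mathbb A^{\dim W}_k$ as $k$-varieties. *)

theory Defs
  imports "HOL-Analysis.Analysis" "HOL-Computational_Algebra.Polynomial"
begin

text \<open>Over an infinite field (e.g. algebraically closed) these are exactly the functions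
  given by polynomials in k[x_1,...,x_n].\<close>
inductive_set polyfun :: "('k::comm_ring_1 ^ 'n \<Rightarrow> 'k) set" where
  pf_const: "(\<lambda>x. c) \<in> polyfun"
| pf_coord: "(\<lambda>x. x $ i) \<in> polyfun"
| pf_add: "g \<in> polyfun \<Longrightarrow> h \<in> polyfun \<Longrightarrow> (\<lambda>x. g x + h x) \<in> polyfun"
| pf_mult: "g \<in> polyfun \<Longrightarrow> h \<in> polyfun \<Longrightarrow> (\<lambda>x. g x * h x) \<in> polyfun"

definition polymap :: "('k::comm_ring_1 ^ 'n \<Rightarrow> 'k ^ 'm) \<Rightarrow> bool" where
  "polymap F \<longleftrightarrow> (\<forall>j. (\<lambda>x. F x $ j) \<in> polyfun)"

text \<open>The (reduced) closed subvariety V of A^n is isomorphic to A^d (d = CARD('d)):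
  mutually inverse morphisms A^d -> V and V -> A^d (morphisms between affine
  varieties are restrictions of polynomial maps).\<close>
definition iso_affine_space :: "('k::comm_ring_1 ^ 'n) set \<Rightarrow> 'd::finite itself \<Rightarrow> bool" where
  "iso_affine_space V (_::'d itself) \<longleftrightarrow>
     (\<exists>(\<phi>::'k^'n \<Rightarrow> 'k^'d) (\<psi>::'k^'d \<Rightarrow> 'k^'n).
        polymap \<phi> \<and> polymap \<psi> \<and> range \<psi> \<subseteq> V \<and>
        (\<forall>y. \<phi> (\<psi> y) = y) \<and> (\<forall>x\<in>V. \<psi> (\<phi> x) = x))"

definition addpoly_map ::
  "nat \<Rightarrow> ('n::finite \<Rightarrow> 'n \<Rightarrow> nat \<Rightarrow> 'k::comm_ring_1) \<Rightarrow> ('n \<Rightarrow> nat) \<Rightarrow> 'k^'n \<Rightarrow> 'k^'n" where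
  "addpoly_map p a N x = (\<chi> j. \<Sum>i\<in>UNIV. \<Sum>l\<le>N j. a j i l * (x $ i) ^ (p ^ l))"

text \<open>A morphism F : A^n -> A^m is finite: k[x_1..x_n] is integral over the subring
  k[F_1..F_m], i.e. each coordinate x_i satisfies a monic equation whose
  coefficients are polynomials in F_1,...,F_m.\<close>
definition finite_morphism :: "('k::comm_ring_1 ^ 'n \<Rightarrow> 'k ^ 'm) \<Rightarrow> bool" where
  "finite_morphism F \<longleftrightarrow>
     (\<forall>i. \<exists>(m::nat) (c::nat \<Rightarrow> ('k^'m \<Rightarrow> 'k)). (\<forall>r<m. c r \<in> polyfun) \<and>
        (\<forall>x. (x $ i) ^ m + (\<Sum>r<m. c r (F x) * (x $ i) ^ r) = 0))"

end

theory Submission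
  imports Defs
begin

text \<open>
  Coordinatewise, an additive polynomial map \<open>k\<^sup>n \<rightarrow> k\<^sup>m\<close> is a matrix of
  p-polynomials \<open>\<Sum>\<^sub>l c\<^sub>l x^(p^l)\<close> in one variable. These admit division with
  remainder \<open>A = B \<circ> Q + R\<close> with R shorter than B, because the coefficients have
  \<open>p^t\<close>-th roots. Composing with invertible transvections \<open>x\<^sub>j := x\<^sub>j + Q x\<^sub>i\<close>
  therefore runs the Euclidean algorithm on a row, until on a coordinate subspace the row is a
  single p-polynomial g of a single coordinate. Since nonzero p-polynomials are surjective, this
  yields an Ax-Grothendieck statement: an injective additive map from a coordinate subspace into
  one of the same dimension is onto, and then g is injective. Peeling off the rows one at a time,
  the preimage of a coordinate subspace under a bijective additive map is the image of a
  coordinate subspace of the same dimension under an additive automorphism, whose inverse is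
  polynomial as well. A linear change of coordinates makes W a coordinate subspace.
\<close>

section \<open>p-polynomials\<close>

definition additive_poly_below :: "nat \<Rightarrow> ('k::comm_ring_1 \<Rightarrow> 'k) \<Rightarrow> bool" where
  "additive_poly_below L g \<longleftrightarrow> (\<exists>c. g = (\<lambda>x. \<Sum>l<L. c l * x ^ (CHAR('k) ^ l)))"

definition additive_poly :: "('k::comm_ring_1 \<Rightarrow> 'k) \<Rightarrow> bool" where
  "additive_poly g \<longleftrightarrow> (\<exists>L. additive_poly_below L g)"

text \<open>One more than the p-degree, and 0 for the zero function.\<close>
definition additive_poly_len :: "('k::comm_ring_1 \<Rightarrow> 'k) \<Rightarrow> nat" where
  "additive_poly_len g = (LEAST L. additive_poly_below L g)"

lemma additive_poly_belowI:
  fixes g :: "'k::comm_ring_1 \<Rightarrow> 'k"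
  shows "g = (\<lambda>x. \<Sum>l<L. c l * x ^ (CHAR('k) ^ l)) \<Longrightarrow> additive_poly_below L g"
  unfolding additive_poly_below_def by blast

lemma additive_poly_below_imp_additive_poly: "additive_poly_below L g \<Longrightarrow> additive_poly g"
  unfolding additive_poly_def by blast

lemma additive_poly_below_mono:
  fixes g :: "'k::comm_ring_1 \<Rightarrow> 'k"
  assumes "additive_poly_below L g" "L \<le> M"
  shows "additive_poly_below M g"
proof -
  obtain c where c: "g = (\<lambda>x. \<Sum>l<L. c l * x ^ (CHAR('k) ^ l))"
    using assms(1) unfolding additive_poly_below_def by blast
  have "g = (\<lambda>x. \<Sum>l<M. (if l < L then c l else 0) * x ^ (CHAR('k) ^ l))"
    unfolding c using assms(2) by (intro ext sum.mono_neutral_cong_left) auto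
  then show ?thesis by (rule additive_poly_belowI)
qed

lemma additive_poly_below_zero: "additive_poly_below L (\<lambda>x. 0)"
  by (rule additive_poly_belowI[where c = "\<lambda>_. 0"]) simp

lemma additive_poly_below_monom:
  assumes "l < L"
  shows "additive_poly_below L (\<lambda>x::'k::comm_ring_1. c * x ^ (CHAR('k) ^ l))"
proof (rule additive_poly_belowI)
  show "(\<lambda>x::'k. c * x ^ (CHAR('k) ^ l)) = (\<lambda>x. \<Sum>m<L. (if m = l then c else 0) * x ^ (CHAR('k) ^ m))"
    using assms by (simp add: if_distrib[where f="\<lambda>a. a * _"] cong: if_cong)
qed

lemma additive_poly_below_add:
  fixes f g :: "'k::comm_ring_1 \<Rightarrow> 'k"
  assumes "additive_poly_below L f" "additive_poly_below L g"
  shows "additive_poly_below L (\<lambda>x. f x + g x)"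
proof -
  obtain c d where "f = (\<lambda>x. \<Sum>l<L. c l * x ^ (CHAR('k) ^ l))" "g = (\<lambda>x. \<Sum>l<L. d l * x ^ (CHAR('k) ^ l))"
    using assms unfolding additive_poly_below_def by blast
  then have "(\<lambda>x. f x + g x) = (\<lambda>x. \<Sum>l<L. (c l + d l) * x ^ (CHAR('k) ^ l))"
    by (simp add: sum.distrib distrib_right)
  then show ?thesis by (rule additive_poly_belowI)
qed

lemma additive_poly_below_cmult:
  fixes f :: "'k::comm_ring_1 \<Rightarrow> 'k"
  assumes "additive_poly_below L f"
  shows "additive_poly_below L (\<lambda>x. c * f x)"
proof -
  obtain d where "f = (\<lambda>x. \<Sum>l<L. d l * x ^ (CHAR('k) ^ l))"
    using assms unfolding additive_poly_below_def by blast
  then have "(\<lambda>x. c * f x) = (\<lambda>x. \<Sum>l<L. (c * d l) * x ^ (CHAR('k) ^ l))"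
    by (simp add: sum_distrib_left mult.assoc)
  then show ?thesis by (rule additive_poly_belowI)
qed

lemma additive_poly_below_diff:
  assumes "additive_poly_below L f" "additive_poly_below L g"
  shows "additive_poly_below L (\<lambda>x. f x - g x)"
  using additive_poly_below_add[OF assms(1) additive_poly_below_cmult[OF assms(2), of "-1"]] by simp

lemma additive_poly_below_sum:
  "(\<And>i. i \<in> A \<Longrightarrow> additive_poly_below L (f i)) \<Longrightarrow> additive_poly_below L (\<lambda>x. \<Sum>i\<in>A. f i x)"
  by (induction A rule: infinite_finite_induct) (simp_all add: additive_poly_below_zero additive_poly_below_add)

lemma additive_poly_len_le: "additive_poly_below L g \<Longrightarrow> additive_poly_len g \<le> L"
  unfolding additive_poly_len_def by (rule Least_le)

lemma additive_poly_below_len: "additive_poly g \<Longrightarrow> additive_poly_below (additive_poly_len g) g"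
  unfolding additive_poly_def additive_poly_len_def by (rule LeastI_ex)

lemma additive_poly_len_eq_0_iff:
  assumes "additive_poly g"
  shows "additive_poly_len g = 0 \<longleftrightarrow> g = (\<lambda>x. 0)"
  using additive_poly_below_len[OF assms] additive_poly_len_le[OF additive_poly_below_zero]
  by (auto simp: additive_poly_below_def)

lemma additive_poly_len_SucE:
  fixes g :: "'k::comm_ring_1 \<Rightarrow> 'k"
  assumes "additive_poly g" "additive_poly_len g = Suc t"
  obtains c where "g = (\<lambda>x. \<Sum>l<Suc t. c l * x ^ (CHAR('k) ^ l))" "c t \<noteq> 0"
proof -
  obtain c where c: "g = (\<lambda>x. \<Sum>l<Suc t. c l * x ^ (CHAR('k) ^ l))"
    using additive_poly_below_len[OF assms(1)] assms(2) unfolding additive_poly_below_def by auto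
  moreover have "c t \<noteq> 0"
  proof
    assume "c t = 0"
    then have "additive_poly_below t g"
      unfolding c by (intro additive_poly_belowI[where c = c]) simp
    with assms(2) show False
      using additive_poly_len_le by fastforce
  qed
  ultimately show ?thesis using that by blast
qed

lemma additive_poly_monom: "additive_poly (\<lambda>x::'k::comm_ring_1. c * x ^ (CHAR('k) ^ l))"
  using additive_poly_below_monom[of l "Suc l"] by (blast intro: additive_poly_below_imp_additive_poly)

lemma additive_poly_id: "additive_poly (\<lambda>x::'k::comm_ring_1. x)"
  using additive_poly_monom[of 1 0] by simp

lemma additive_poly_add:
  assumes "additive_poly f" "additive_poly g"
  shows "additive_poly (\<lambda>x. f x + g x)"
proof -
  obtain L M where "additive_poly_below L f" "additive_poly_below M g"
    using assms unfolding additive_poly_def by blast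
  then have "additive_poly_below (max L M) f" "additive_poly_below (max L M) g"
    by (auto elim: additive_poly_below_mono)
  then show ?thesis
    by (blast intro: additive_poly_below_imp_additive_poly additive_poly_below_add)
qed

lemma additive_poly_cmult: "additive_poly f \<Longrightarrow> additive_poly (\<lambda>x. c * f x)"
  unfolding additive_poly_def using additive_poly_below_cmult by blast

lemma additive_poly_sum:
  "(\<And>i. i \<in> A \<Longrightarrow> additive_poly (f i)) \<Longrightarrow> additive_poly (\<lambda>x. \<Sum>i\<in>A. f i x)"
  by (induction A rule: infinite_finite_induct)
     (simp_all add: additive_poly_add additive_poly_below_imp_additive_poly[OF additive_poly_below_zero])

section \<open>Additive maps and coordinate subspaces\<close>

definition coord_subspace :: "'n set \<Rightarrow> ('k::zero ^ 'n) set" where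
  "coord_subspace I = {x. \<forall>j. j \<notin> I \<longrightarrow> x $ j = 0}"

text \<open>\<open>r j i\<close> is the \<open>(j, i)\<close> entry of a matrix of p-polynomials: these are the
  homomorphisms of algebraic groups \<open>G\<^sub>a\<^sup>n \<rightarrow> G\<^sub>a\<^sup>m\<close>.\<close>
definition additive_map :: "('k::comm_ring_1 ^ 'n::finite \<Rightarrow> 'k ^ 'm) \<Rightarrow> bool" where
  "additive_map F \<longleftrightarrow>
     (\<exists>r. (\<forall>j i. additive_poly (r j i)) \<and> (\<forall>x j. F x $ j = (\<Sum>i\<in>UNIV. r j i (x $ i))))"

definition additive_automorphism :: "('k::comm_ring_1 ^ 'n::finite \<Rightarrow> 'k ^ 'n) \<Rightarrow> bool" where
  "additive_automorphism E \<longleftrightarrow>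
     additive_map E \<and> (\<exists>E'. additive_map E' \<and> (\<forall>x. E' (E x) = x) \<and> (\<forall>x. E (E' x) = x))"

definition transvection :: "'n \<Rightarrow> 'n \<Rightarrow> ('k \<Rightarrow> 'k) \<Rightarrow> 'k::monoid_add ^ 'n \<Rightarrow> 'k ^ 'n" where
  "transvection i j Q x = x + axis j (Q (x $ i))"

lemma coord_subspace_remove: "coord_subspace (I - {i}) = {y \<in> coord_subspace I. y $ i = 0}"
  by (auto simp: coord_subspace_def)

lemma coord_subspace_empty: "coord_subspace {} = {0}"
  by (auto simp: coord_subspace_def vec_eq_iff)

lemma coord_subspace_UNIV: "coord_subspace UNIV = UNIV"
  by (simp add: coord_subspace_def)

lemma axis_in_coord_subspace: "i \<in> I \<Longrightarrow> axis i a \<in> coord_subspace I"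
  by (simp add: coord_subspace_def axis_def)

lemma coord_subspace_add:
  "x \<in> coord_subspace I \<Longrightarrow> y \<in> coord_subspace I \<Longrightarrow> x + y \<in> (coord_subspace I :: ('k::monoid_add ^ 'n) set)"
  by (simp add: coord_subspace_def)

lemma coord_subspace_diff:
  "x \<in> coord_subspace I \<Longrightarrow> y \<in> coord_subspace I \<Longrightarrow> x - y \<in> (coord_subspace I :: ('k::group_add ^ 'n) set)"
  by (simp add: coord_subspace_def)

lemma additive_mapI:
  fixes F :: "'k::comm_ring_1 ^ 'n::finite \<Rightarrow> 'k ^ 'm"
  assumes "\<And>j i. additive_poly (r j i)" "\<And>x j. F x $ j = (\<Sum>i\<in>UNIV. r j i (x $ i))"
  shows "additive_map F"
  using assms unfolding additive_map_def by blast

lemma additive_mapE: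
  fixes F :: "'k::comm_ring_1 ^ 'n::finite \<Rightarrow> 'k ^ 'm"
  assumes "additive_map F"
  obtains r where "\<And>j i. additive_poly (r j i)" "\<And>x j. F x $ j = (\<Sum>i\<in>UNIV. r j i (x $ i))"
  using assms unfolding additive_map_def by blast

lemma additive_map_id: "additive_map (\<lambda>x::'k::comm_ring_1 ^ 'n::finite. x)"
proof (rule additive_mapI)
  show "additive_poly (\<lambda>z. (if i = j then 1 else 0) * z)" for i j :: 'n
    by (intro additive_poly_cmult additive_poly_id)
  show "x $ j = (\<Sum>i\<in>UNIV. (if i = j then 1 else 0) * x $ i)" for x :: "'k ^ 'n" and j
    by (simp add: if_distrib[where f="\<lambda>a. a * _"] cong: if_cong)
qed

lemma additive_map_linear:
  fixes L :: "'k::field ^ 'n::finite \<Rightarrow> 'k ^ 'm"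
  assumes "Vector_Spaces.linear (*s) (*s) L"
  shows "additive_map L"
proof (rule additive_mapI)
  show "additive_poly (\<lambda>z. L (axis i 1) $ j * z)" for i j
    by (intro additive_poly_cmult additive_poly_id)
  show "L x $ j = (\<Sum>i\<in>UNIV. L (axis i 1) $ j * x $ i)" for x j
    using linear_componentwise[OF assms, of x j] by (simp add: mult.commute)
qed

lemma additive_map_addpoly_map: "additive_map (addpoly_map CHAR('k) a N :: 'k::comm_ring_1 ^ 'n \<Rightarrow> _)"
proof (rule additive_mapI)
  show "additive_poly (\<lambda>z. \<Sum>l\<le>N j. a j i l * z ^ (CHAR('k) ^ l))" for j i
    by (intro additive_poly_sum additive_poly_monom)
qed (simp add: addpoly_map_def)

lemma additive_map_transvection:
  assumes "additive_poly Q"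
  shows "additive_map (transvection i j Q :: 'k::comm_ring_1 ^ 'n::finite \<Rightarrow> _)"
proof (rule additive_mapI)
  show "additive_poly (\<lambda>z. (if l = t then 1 else 0) * z + (if t = j \<and> l = i then 1 else 0) * Q z)" for t l
    by (intro additive_poly_add additive_poly_cmult additive_poly_id assms)
  show "transvection i j Q x $ t =
      (\<Sum>l\<in>UNIV. (if l = t then 1 else 0) * x $ l + (if t = j \<and> l = i then 1 else 0) * Q (x $ l))" for x t
    by (simp add: transvection_def axis_def sum.distrib if_distrib[where f="\<lambda>a. a * _"] cong: if_cong)
qed

lemma transvection_uminus_transvection:
  fixes x :: "'k::ab_group_add ^ 'n"
  assumes "i \<noteq> j"
  shows "transvection i j (\<lambda>z. - Q z) (transvection i j Q x) = x"
  using assms by (simp add: transvection_def vec_eq_iff axis_def)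

lemma transvection_transvection_uminus:
  fixes x :: "'k::ab_group_add ^ 'n"
  assumes "i \<noteq> j"
  shows "transvection i j Q (transvection i j (\<lambda>z. - Q z) x) = x"
  using assms by (simp add: transvection_def vec_eq_iff axis_def)

lemma transvection_image_coord_subspace:
  fixes Q :: "'k::ab_group_add \<Rightarrow> 'k" and I :: "'n::finite set"
  assumes "i \<in> I" "j \<in> I" "i \<noteq> j"
  shows "transvection i j Q ` coord_subspace I = coord_subspace I"
proof
  have closed: "transvection i j R x \<in> coord_subspace I" if "x \<in> coord_subspace I" for R x
    using assms that by (simp add: transvection_def coord_subspace_def axis_def)
  then show "transvection i j Q ` coord_subspace I \<subseteq> coord_subspace I"
    by blast
  show "coord_subspace I \<subseteq> transvection i j Q ` coord_subspace I"
  proof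
    fix x :: "'k ^ 'n" assume "x \<in> coord_subspace I"
    then show "x \<in> transvection i j Q ` coord_subspace I"
      using closed transvection_transvection_uminus[OF assms(3)] by (metis image_eqI)
  qed
qed

lemma additive_automorphism_id: "additive_automorphism (\<lambda>x::'k::comm_ring_1 ^ 'n::finite. x)"
  unfolding additive_automorphism_def using additive_map_id by blast

lemma additive_automorphism_inj: "additive_automorphism E \<Longrightarrow> inj E"
  unfolding additive_automorphism_def by (metis injI)

lemma additive_automorphism_transvection:
  fixes Q :: "'k::comm_ring_1 \<Rightarrow> 'k"
  assumes "i \<noteq> j" "additive_poly Q"
  shows "additive_automorphism (transvection i j Q :: 'k ^ 'n::finite \<Rightarrow> _)"
  unfolding additive_automorphism_def
proof (intro conjI exI[of _ "transvection i j (\<lambda>z. - Q z)"] allI)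
  show "additive_map (transvection i j Q :: 'k ^ 'n \<Rightarrow> _)"
    by (rule additive_map_transvection[OF assms(2)])
  show "additive_map (transvection i j (\<lambda>z. - Q z) :: 'k ^ 'n \<Rightarrow> _)"
    using additive_poly_cmult[OF assms(2), of "- 1"] by (simp add: additive_map_transvection)
  show "transvection i j (\<lambda>z. - Q z) (transvection i j Q x) = x" for x :: "'k ^ 'n"
    by (rule transvection_uminus_transvection[OF assms(1)])
  show "transvection i j Q (transvection i j (\<lambda>z. - Q z) x) = x" for x :: "'k ^ 'n"
    by (rule transvection_transvection_uminus[OF assms(1)])
qed

lemma pivot_image_subset:
  fixes K :: "'a::zero ^ 'n \<Rightarrow> 'b::zero ^ 'm"
  assumes into: "K ` coord_subspace I \<subseteq> coord_subspace J"
    and row: "\<And>y. y \<in> coord_subspace I \<Longrightarrow> K y $ j = g (y $ i0)" and "g 0 = 0"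
  shows "K ` coord_subspace (I - {i0}) \<subseteq> coord_subspace (J - {j})"
proof
  fix z assume "z \<in> K ` coord_subspace (I - {i0})"
  then obtain y where y: "y \<in> coord_subspace I" "y $ i0 = 0" and z: "z = K y"
    by (auto simp: coord_subspace_remove)
  have "K y \<in> coord_subspace J"
    using into y(1) by blast
  moreover have "K y $ j = 0"
    using row[OF y(1)] y(2) \<open>g 0 = 0\<close> by simp
  ultimately show "z \<in> coord_subspace (J - {j})"
    by (simp add: coord_subspace_remove z)
qed

lemma pivot_injective:
  fixes K :: "'a::zero ^ 'n::finite \<Rightarrow> 'b::zero ^ 'm"
  assumes inj: "inj_on K (coord_subspace I)" and "i0 \<in> I"
    and into: "K ` coord_subspace I \<subseteq> coord_subspace J"
    and onto: "coord_subspace (J - {j}) \<subseteq> K ` coord_subspace (I - {i0})"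
    and row: "\<And>y. y \<in> coord_subspace I \<Longrightarrow> K y $ j = g (y $ i0)" and "g a = 0"
  shows "a = 0"
proof -
  have y: "axis i0 a \<in> coord_subspace I"
    using \<open>i0 \<in> I\<close> by (rule axis_in_coord_subspace)
  have "K (axis i0 a) \<in> coord_subspace J"
    using into y by blast
  moreover have "K (axis i0 a) $ j = 0"
    using row[OF y] \<open>g a = 0\<close> by simp
  ultimately obtain y' where y': "y' \<in> coord_subspace (I - {i0})" "K y' = K (axis i0 a)"
    using onto by (auto simp: coord_subspace_remove)
  then have "y' \<in> coord_subspace I"
    by (simp add: coord_subspace_remove)
  with y' y have "y' = axis i0 a"
    using inj_onD[OF inj] by blast
  then show "a = 0"
    using y'(1) by (simp add: coord_subspace_remove)
qed

section \<open>Polynomial maps and affine spaces\<close>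

lemma polyfun_sum:
  fixes f :: "'b \<Rightarrow> 'k::comm_ring_1 ^ 'n \<Rightarrow> 'k"
  shows "(\<And>a. a \<in> A \<Longrightarrow> f a \<in> polyfun) \<Longrightarrow> (\<lambda>x. \<Sum>a\<in>A. f a x) \<in> polyfun"
  by (induction A rule: infinite_finite_induct) (simp_all add: pf_const pf_add)

lemma polyfun_power:
  fixes g :: "'k::comm_ring_1 ^ 'n \<Rightarrow> 'k"
  shows "g \<in> polyfun \<Longrightarrow> (\<lambda>x. g x ^ m) \<in> polyfun"
  by (induction m) (simp_all add: pf_const pf_mult)

lemma polyfun_compose:
  fixes F :: "'k::comm_ring_1 ^ 'n \<Rightarrow> 'k ^ 'm"
  assumes "h \<in> polyfun" and "polymap F"
  shows "(\<lambda>x. h (F x)) \<in> polyfun"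
  using assms(1)
proof (induction h rule: polyfun.induct)
  case (pf_coord i)
  then show ?case
    using assms(2) by (simp add: polymap_def)
qed (simp_all add: polyfun.intros)

lemma polymap_compose:
  fixes F :: "'k::comm_ring_1 ^ 'n \<Rightarrow> 'k ^ 'm" and G :: "'k ^ 'm \<Rightarrow> 'k ^ 'p"
  assumes "polymap G" "polymap F"
  shows "polymap (\<lambda>x. G (F x))"
  unfolding polymap_def
proof
  fix j
  have "(\<lambda>y. G y $ j) \<in> polyfun"
    using assms(1) by (simp add: polymap_def)
  then show "(\<lambda>x. G (F x) $ j) \<in> polyfun"
    using assms(2) by (rule polyfun_compose)
qed

lemma additive_map_polymap:
  fixes F :: "'k::comm_ring_1 ^ 'n::finite \<Rightarrow> 'k ^ 'm"
  assumes "additive_map F"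
  shows "polymap F"
proof -
  obtain r where r: "\<And>j i. additive_poly (r j i)" "\<And>x j. F x $ j = (\<Sum>i\<in>UNIV. r j i (x $ i))"
    using additive_mapE[OF assms] by blast
  have "(\<lambda>x::'k ^ 'n. r j i (x $ i)) \<in> polyfun" for j i
  proof -
    obtain L c where "r j i = (\<lambda>z. \<Sum>l<L. c l * z ^ (CHAR('k) ^ l))"
      using r(1) unfolding additive_poly_def additive_poly_below_def by blast
    then show ?thesis
      by (simp add: polyfun_sum pf_mult pf_const polyfun_power pf_coord)
  qed
  then show ?thesis
    unfolding polymap_def r(2) by (intro allI polyfun_sum)
qed

lemma iso_affine_space_coord_subspace:
  fixes I :: "'n::finite set"
  assumes "card I = CARD('d::finite)"
  shows "iso_affine_space (coord_subspace I :: ('k::comm_ring_1 ^ 'n) set) TYPE('d)"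
proof -
  obtain \<beta> :: "'d \<Rightarrow> 'n" where \<beta>: "bij_betw \<beta> UNIV I"
    using assms by (metis finite finite_same_card_bij)
  define \<psi> :: "'k ^ 'd \<Rightarrow> 'k ^ 'n" where
    "\<psi> = (\<lambda>u. \<chi> i. if i \<in> I then u $ inv_into UNIV \<beta> i else 0)"
  define \<phi> :: "'k ^ 'n \<Rightarrow> 'k ^ 'd" where "\<phi> = (\<lambda>x. \<chi> t. x $ \<beta> t)"
  have "(\<lambda>u. \<psi> u $ i) \<in> polyfun" for i
    by (cases "i \<in> I") (simp_all add: \<psi>_def pf_coord pf_const)
  then have "polymap \<psi>" "polymap \<phi>"
    unfolding polymap_def \<phi>_def by (simp_all add: pf_coord)
  moreover have "range \<psi> \<subseteq> coord_subspace I"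
    by (auto simp: \<psi>_def coord_subspace_def)
  moreover have "\<phi> (\<psi> u) = u" for u
    using \<beta> by (auto simp: \<phi>_def \<psi>_def vec_eq_iff bij_betw_def)
  moreover have "\<psi> (\<phi> x) = x" if "x \<in> coord_subspace I" for x
    using \<beta> that by (auto simp: \<phi>_def \<psi>_def vec_eq_iff coord_subspace_def bij_betw_def f_inv_into_f)
  ultimately show ?thesis
    unfolding iso_affine_space_def by blast
qed

lemma iso_affine_space_image:
  fixes P P' :: "'k::comm_ring_1 ^ 'n \<Rightarrow> 'k ^ 'n"
  assumes "polymap P" "polymap P'" "\<And>x. P' (P x) = x" and "iso_affine_space V TYPE('d::finite)"
  shows "iso_affine_space (P ` V) TYPE('d)"
proof -
  obtain \<phi> :: "'k ^ 'n \<Rightarrow> 'k ^ 'd" and \<psi> where \<phi>: "polymap \<phi>" and \<psi>: "polymap \<psi>"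
    and "range \<psi> \<subseteq> V" "\<forall>y. \<phi> (\<psi> y) = y" "\<forall>x\<in>V. \<psi> (\<phi> x) = x"
    using assms(4) unfolding iso_affine_space_def by blast
  moreover have "polymap (\<lambda>x. \<phi> (P' x))"
    using \<phi> assms(2) by (rule polymap_compose)
  moreover have "polymap (\<lambda>y. P (\<psi> y))"
    using assms(1) \<psi> by (rule polymap_compose)
  ultimately show ?thesis
    unfolding iso_affine_space_def using assms(3)
    by (intro exI[of _ "\<lambda>x. \<phi> (P' x)"] exI[of _ "\<lambda>y. P (\<psi> y)"] conjI) auto
qed

lemma iso_affine_space_additive_automorphism_image:
  assumes "additive_automorphism P" "iso_affine_space V TYPE('d::finite)"
  shows "iso_affine_space (P ` V) TYPE('d)"
proof -
  obtain P' where "additive_map P" "additive_map P'" "\<And>x. P' (P x) = x"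
    using assms(1) unfolding additive_automorphism_def by blast
  then show ?thesis
    using additive_map_polymap iso_affine_space_image assms(2) by blast
qed

lemma subspace_coord_subspace: "vec.subspace (coord_subspace D :: ('k::field ^ 'n) set)"
  unfolding vec.subspace_def by (simp add: coord_subspace_def)

lemma span_axis_eq_coord_subspace:
  "vec.span ((\<lambda>d. axis d (1::'k::field)) ` D) = (coord_subspace D :: ('k ^ 'n::finite) set)"
proof
  show "vec.span ((\<lambda>d. axis d 1) ` D) \<subseteq> coord_subspace D"
    by (rule vec.span_minimal[OF _ subspace_coord_subspace]) (auto simp: coord_subspace_def axis_def)
  show "coord_subspace D \<subseteq> vec.span ((\<lambda>d. axis d (1::'k)) ` D)"
  proof
    fix x :: "'k ^ 'n" assume x: "x \<in> coord_subspace D"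
    have "x = (\<Sum>d\<in>D. x $ d *s axis d 1)"
      using x by (auto simp: vec_eq_iff sum_component axis_def coord_subspace_def
          if_distrib[where f="\<lambda>a. _ * a"] cong: if_cong)
    also have "\<dots> \<in> vec.span ((\<lambda>d. axis d 1) ` D)"
      by (intro vec.span_sum vec.span_scale vec.span_base) auto
    finally show "x \<in> vec.span ((\<lambda>d. axis d 1) ` D)" .
  qed
qed

lemma linear_equiv_coord_subspace:
  fixes W :: "('k::field ^ 'n::finite) set"
  assumes W: "vec.subspace W"
  obtains L :: "'k ^ 'n \<Rightarrow> 'k ^ 'n" and D :: "'n set"
  where "Vector_Spaces.linear (*s) (*s) L" "bij L" "card D = vec.dim W" "L ` W = coord_subspace D"
proof -
  obtain B where B: "B \<subseteq> W" "vec.independent B" "W \<subseteq> vec.span B" "card B = vec.dim W"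
    using vec.basis_exists by blast
  define C where "C = vec.extend_basis B"
  have C: "B \<subseteq> C" "vec.independent C" "vec.span C = UNIV"
    unfolding C_def using B(2) vec.extend_basis_superset vec.independent_extend_basis vec.span_extend_basis
    by auto
  have "card C = vec.dim (UNIV :: ('k ^ 'n) set)"
    using C vec.basis_card_eq_dim by blast
  then obtain \<gamma> where \<gamma>: "bij_betw \<gamma> C (UNIV :: 'n set)"
    using finite_same_card_bij[OF vec.finiteI_independent[OF C(2)] finite] by (auto simp: card_cart_basis)
  define L where "L = vec.construct C (\<lambda>c. axis (\<gamma> c) (1::'k))"
  have L: "Vector_Spaces.linear (*s) (*s) L"
    unfolding L_def by (rule vec.linear_construct[OF C(2)])
  interpret L: Vector_Spaces.linear "(*s)" "(*s)" L by (rule L)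
  have L_image: "L ` vec.span S = vec.span ((\<lambda>d. axis d 1) ` \<gamma> ` S)" if "S \<subseteq> C" for S
  proof -
    have "L ` S = (\<lambda>d. axis d 1) ` \<gamma> ` S"
      unfolding image_image L_def using that
      by (intro image_cong) (auto simp: vec.construct_basis[OF C(2)])
    then show ?thesis
      by (metis L.span_image)
  qed
  have "surj L"
    using L_image[of C] C(3) \<gamma> span_axis_eq_coord_subspace[of UNIV]
    by (simp add: bij_betw_def coord_subspace_UNIV)
  then have "bij L"
    using vec.linear_surjective_imp_injective[OF L] by (simp add: bij_def)
  moreover have "card (\<gamma> ` B) = vec.dim W"
    using B(4) C(1) \<gamma> by (metis bij_betw_def card_image inj_on_subset)
  moreover have "L ` W = coord_subspace (\<gamma> ` B)"
    using L_image[OF C(1)] vec.span_subspace[OF B(1,3) W] span_axis_eq_coord_subspace by simp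
  ultimately show ?thesis
    using that L by blast
qed

section \<open>Additivity in characteristic p\<close>

context
  assumes prime_char: "prime CHAR('k::comm_ring_1)"
begin

lemma additive_poly_apply_add:
  assumes "additive_poly g"
  shows "g ((x::'k) + y) = g x + g y"
  using assms unfolding additive_poly_def additive_poly_below_def
  by (auto simp: freshmans_dream'[OF prime_char] distrib_left sum.distrib)

lemma additive_poly_apply_0: "additive_poly (g::'k \<Rightarrow> 'k) \<Longrightarrow> g 0 = 0"
  using additive_poly_apply_add[of g 0 0] by simp

lemma additive_poly_apply_uminus: "additive_poly (g::'k \<Rightarrow> 'k) \<Longrightarrow> g (- x) = - g x"
  using additive_poly_apply_add[of g x "- x"] additive_poly_apply_0[of g]
  by (simp add: eq_neg_iff_add_eq_0 add.commute)

lemma additive_poly_apply_sum: "additive_poly (g::'k \<Rightarrow> 'k) \<Longrightarrow> g (\<Sum>i\<in>A. f i) = (\<Sum>i\<in>A. g (f i))"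
  by (induction A rule: infinite_finite_induct) (simp_all add: additive_poly_apply_0 additive_poly_apply_add)

lemma additive_poly_compose:
  assumes "additive_poly f" "additive_poly (g::'k \<Rightarrow> 'k)"
  shows "additive_poly (\<lambda>x. f (g x))"
proof -
  obtain L c where f: "f = (\<lambda>x. \<Sum>l<L. c l * x ^ (CHAR('k) ^ l))"
    using assms(1) unfolding additive_poly_def additive_poly_below_def by blast
  obtain M d where g: "g = (\<lambda>x. \<Sum>m<M. d m * x ^ (CHAR('k) ^ m))"
    using assms(2) unfolding additive_poly_def additive_poly_below_def by blast
  have "g x ^ (CHAR('k) ^ l) = (\<Sum>m<M. d m ^ (CHAR('k) ^ l) * x ^ (CHAR('k) ^ (m + l)))" for x l
    unfolding g freshmans_dream_sum'[OF prime_char refl]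
    by (simp add: power_mult_distrib power_add flip: power_mult)
  then have "(\<lambda>x. f (g x)) = (\<lambda>x. \<Sum>l<L. c l * (\<Sum>m<M. d m ^ (CHAR('k) ^ l) * x ^ (CHAR('k) ^ (m + l))))"
    unfolding f by simp
  then show ?thesis
    by (simp only:) (intro additive_poly_sum additive_poly_cmult additive_poly_monom)
qed

lemma additive_map_add:
  fixes F :: "'k ^ 'n::finite \<Rightarrow> 'k ^ 'm"
  assumes "additive_map F"
  shows "F (x + y) = F x + F y"
proof -
  obtain r where "\<And>j i. additive_poly (r j i)" "\<And>x j. F x $ j = (\<Sum>i\<in>UNIV. r j i (x $ i))"
    using additive_mapE[OF assms] by blast
  then show ?thesis
    by (simp add: vec_eq_iff additive_poly_apply_add sum.distrib)
qed

lemma additive_map_0: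
  fixes F :: "'k ^ 'n::finite \<Rightarrow> 'k ^ 'm"
  shows "additive_map F \<Longrightarrow> F 0 = 0"
  using additive_map_add[of F 0 0] by simp

lemma additive_map_compose:
  fixes F :: "'k ^ 'm::finite \<Rightarrow> 'k ^ 'p" and G :: "'k ^ 'n::finite \<Rightarrow> 'k ^ 'm"
  assumes "additive_map F" "additive_map G"
  shows "additive_map (\<lambda>x. F (G x))"
proof -
  obtain r where r: "\<And>j i. additive_poly (r j i)" "\<And>x j. F x $ j = (\<Sum>i\<in>UNIV. r j i (x $ i))"
    using additive_mapE[OF assms(1)] by blast
  obtain s where s: "\<And>j i. additive_poly (s j i)" "\<And>x j. G x $ j = (\<Sum>i\<in>UNIV. s j i (x $ i))"
    using additive_mapE[OF assms(2)] by blast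
  show ?thesis
  proof (rule additive_mapI)
    show "additive_poly (\<lambda>z. \<Sum>l\<in>UNIV. r j l (s l i z))" for j i
      by (rule additive_poly_sum, rule additive_poly_compose[OF r(1) s(1)])
    show "F (G x) $ j = (\<Sum>i\<in>UNIV. \<Sum>l\<in>UNIV. r j l (s l i (x $ i)))" for x j
      unfolding r(2) s(2) additive_poly_apply_sum[OF r(1)] by (rule sum.swap)
  qed
qed

lemma additive_automorphism_compose:
  fixes E F :: "'k ^ 'n::finite \<Rightarrow> 'k ^ 'n"
  assumes "additive_automorphism E" "additive_automorphism F"
  shows "additive_automorphism (\<lambda>x. E (F x))"
proof -
  obtain E' F' where E': "additive_map E'" "\<forall>x. E' (E x) = x" "\<forall>x. E (E' x) = x"
    and F': "additive_map F'" "\<forall>x. F' (F x) = x" "\<forall>x. F (F' x) = x"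
    using assms unfolding additive_automorphism_def by blast
  have "additive_map E" "additive_map F"
    using assms unfolding additive_automorphism_def by blast+
  then have "additive_map (\<lambda>x. E (F x))"
    by (rule additive_map_compose)
  moreover have "additive_map (\<lambda>x. F' (E' x))"
    using F'(1) E'(1) by (rule additive_map_compose)
  ultimately show ?thesis
    using E'(2,3) F'(2,3) unfolding additive_automorphism_def
    by (intro conjI exI[of _ "\<lambda>x. F' (E' x)"]) simp_all
qed

lemma additive_map_compose_automorphism:
  fixes K :: "'k ^ 'n::finite \<Rightarrow> 'k ^ 'm"
  assumes K: "additive_map K" "inj_on K (coord_subspace I)"
    and E: "additive_automorphism E" "E ` coord_subspace I = coord_subspace I"
  shows "additive_map (\<lambda>y. K (E y))" "inj_on (\<lambda>y. K (E y)) (coord_subspace I)"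
    "(\<lambda>y. K (E y)) ` coord_subspace I = K ` coord_subspace I"
proof -
  show "additive_map (\<lambda>y. K (E y))"
    using E(1) unfolding additive_automorphism_def by (intro additive_map_compose[OF K(1)]) simp
  have "inj_on K (E ` coord_subspace I)"
    using K(2) E(2) by simp
  then show "inj_on (\<lambda>y. K (E y)) (coord_subspace I)"
    using comp_inj_on[OF inj_on_subset[OF additive_automorphism_inj[OF E(1)]]] by (simp add: o_def)
  show "(\<lambda>y. K (E y)) ` coord_subspace I = K ` coord_subspace I"
    using E(2) by (metis image_image)
qed

lemma row_transvection:
  fixes r :: "'n::finite \<Rightarrow> 'k \<Rightarrow> 'k"
  assumes "i \<noteq> j" and r: "\<And>l. additive_poly (r l)"
  shows "(\<Sum>l\<in>UNIV. r l (transvection i j (\<lambda>z. - Q z) x $ l))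
       = (\<Sum>l\<in>UNIV. (r(i := \<lambda>z. r i z - r j (Q z))) l (x $ l))"
proof -
  let ?d = "r j (Q (x $ i))"
  have "r l (transvection i j (\<lambda>z. - Q z) x $ l) = r l (x $ l) + (if l = j then - ?d else 0)" for l
    using \<open>i \<noteq> j\<close> additive_poly_apply_add[OF r] additive_poly_apply_uminus[OF r] additive_poly_apply_0[OF r]
    by (simp add: transvection_def axis_def)
  moreover have "(r(i := \<lambda>z. r i z - r j (Q z))) l (x $ l) = r l (x $ l) + (if l = i then - ?d else 0)" for l
    by simp
  ultimately show ?thesis
    by (simp add: sum.distrib)
qed

lemma row_single_entry:
  fixes r :: "'n::finite \<Rightarrow> 'k \<Rightarrow> 'k"
  assumes "\<And>l. additive_poly (r l)" "i0 \<in> I" "\<And>l. l \<in> I \<Longrightarrow> l \<noteq> i0 \<Longrightarrow> r l = (\<lambda>x. 0)"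
    and "y \<in> coord_subspace I"
  shows "(\<Sum>l\<in>UNIV. r l (y $ l)) = r i0 (y $ i0)"
proof (rule sum.mono_neutral_right[of UNIV "{i0}", simplified]; intro ballI)
  fix l assume "l \<in> UNIV - {i0}"
  then show "r l (y $ l) = 0"
    using assms additive_poly_apply_0 by (cases "l \<in> I") (auto simp: coord_subspace_def)
qed

end

section \<open>Row reduction over an algebraically closed field\<close>

context
  assumes prime_char: "prime CHAR('k::alg_closed_field)"
begin

lemma additive_poly_cancel_leading:
  fixes A B :: "'k \<Rightarrow> 'k"
  assumes B: "additive_poly B" "additive_poly_len B = Suc t"
    and A: "additive_poly_below (Suc s) A" and "t \<le> s"
  obtains q where "additive_poly_below s (\<lambda>x. A x - B (q * x ^ (CHAR('k) ^ (s - t))))"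
proof -
  let ?p = "CHAR('k)"
  define k where "k = s - t"
  obtain a where a: "A = (\<lambda>x. \<Sum>l<Suc s. a l * x ^ (?p ^ l))"
    using A unfolding additive_poly_below_def by blast
  obtain b where b: "B = (\<lambda>x. \<Sum>l<Suc t. b l * x ^ (?p ^ l))" "b t \<noteq> 0"
    using additive_poly_len_SucE[OF B] by blast
  \<comment> \<open>then \<open>B (q * x ^ (p ^ k))\<close> has the same leading coefficient \<open>b t * q ^ p ^ t = a s\<close> as A\<close>
  obtain q :: 'k where q: "q ^ (?p ^ t) = a s / b t"
    using nth_root_exists prime_char prime_gt_0_nat by (metis zero_less_power)
  have "A x - B (q * x ^ (?p ^ k))
      = (\<Sum>l<s. a l * x ^ (?p ^ l)) - (\<Sum>l<t. (b l * q ^ (?p ^ l)) * x ^ (?p ^ (l + k)))" for x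
  proof -
    have "B (q * x ^ (?p ^ k)) = (\<Sum>l<Suc t. (b l * q ^ (?p ^ l)) * x ^ (?p ^ (l + k)))"
      unfolding b by (simp add: power_mult_distrib power_add mult_ac flip: power_mult)
    moreover have "b t * q ^ (?p ^ t) = a s" "t + k = s"
      using q b(2) \<open>t \<le> s\<close> by (simp_all add: k_def)
    ultimately show ?thesis
      by (simp add: a)
  qed
  then have "(\<lambda>x. A x - B (q * x ^ (?p ^ k)))
      = (\<lambda>x. (\<Sum>l<s. a l * x ^ (?p ^ l)) - (\<Sum>l<t. (b l * q ^ (?p ^ l)) * x ^ (?p ^ (l + k))))"
    by blast
  moreover have "l + k < s" if "l < t" for l
    using that \<open>t \<le> s\<close> by (simp add: k_def)
  ultimately have "additive_poly_below s (\<lambda>x. A x - B (q * x ^ (?p ^ k)))"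
    by (simp only:) (intro additive_poly_below_diff additive_poly_below_sum additive_poly_below_monom; simp)
  then show ?thesis
    using that k_def by blast
qed

lemma additive_poly_division:
  fixes A B :: "'k \<Rightarrow> 'k"
  assumes B: "additive_poly B" "additive_poly_len B = Suc t" and A: "additive_poly_below s A"
  shows "\<exists>Q R. additive_poly Q \<and> additive_poly_below t R \<and> (\<forall>x. A x = B (Q x) + R x)"
  using A
proof (induction s arbitrary: A)
  case 0
  then have "additive_poly_below t A"
    by (rule additive_poly_below_mono) simp
  then show ?case
    using additive_poly_apply_0[OF prime_char B(1)] additive_poly_monom[of 0 0]
    by (intro exI[of _ "\<lambda>_. 0"] exI[of _ A]) simp
next
  case (Suc s A)
  show ?case
  proof (cases "s < t")
    case True
    then have "additive_poly_below t A"
      using additive_poly_below_mono[OF Suc.prems] by simp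
    then show ?thesis
      using additive_poly_apply_0[OF prime_char B(1)] additive_poly_monom[of 0 0]
      by (intro exI[of _ "\<lambda>_. 0"] exI[of _ A]) simp
  next
    case False
    let ?m = "\<lambda>x. x ^ (CHAR('k) ^ (s - t))"
    obtain q where "additive_poly_below s (\<lambda>x. A x - B (q * ?m x))"
      using additive_poly_cancel_leading[OF B Suc.prems] False by auto
    then obtain Q R where QR: "additive_poly Q" "additive_poly_below t R" "\<forall>x. A x - B (q * ?m x) = B (Q x) + R x"
      using Suc.IH by blast
    have "A x = B (Q x + q * ?m x) + R x" for x
      using QR(3) additive_poly_apply_add[OF prime_char B(1)] by (simp add: algebra_simps)
    moreover have "additive_poly (\<lambda>x. Q x + q * ?m x)"
      by (intro additive_poly_add QR(1) additive_poly_monom)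
    ultimately show ?thesis
      using QR(2) by blast
  qed
qed

lemma additive_poly_surj:
  fixes g :: "'k \<Rightarrow> 'k"
  assumes g: "additive_poly g" and nonzero: "g \<noteq> (\<lambda>x. 0)"
  shows "\<exists>x. g x = y"
proof -
  let ?p = "CHAR('k)"
  obtain t where t: "additive_poly_len g = Suc t"
    using additive_poly_len_eq_0_iff[OF g] nonzero not0_implies_Suc by blast
  obtain c where c: "g = (\<lambda>x. \<Sum>l<Suc t. c l * x ^ (?p ^ l))" and "c t \<noteq> 0"
    using additive_poly_len_SucE[OF g t] by blast
  define P where "P = (\<Sum>l<Suc t. monom (c l) (?p ^ l)) - [:y:]"
  have p1: "?p > 1" using prime_char prime_gt_1_nat by blast
  then have "coeff P (?p ^ t) = (\<Sum>l<Suc t. if l = t then c l else 0)"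
    by (simp add: P_def coeff_sum coeff_monom coeff_pCons' power_inject_exp)
  with \<open>c t \<noteq> 0\<close> have "?p ^ t \<le> degree P"
    by (intro le_degree) simp
  moreover have "?p ^ t > 0"
    using p1 by simp
  ultimately have "degree P > 0"
    by linarith
  then obtain x where "poly P x = 0" using alg_closed_imp_poly_has_root by blast
  then have "g x = y" by (simp add: P_def c poly_sum poly_monom)
  then show ?thesis by blast
qed

lemma additive_poly_len_reduce:
  fixes A B :: "'k \<Rightarrow> 'k"
  assumes A: "additive_poly A" and B: "additive_poly B" "B \<noteq> (\<lambda>x. 0)"
    and len_le: "additive_poly_len B \<le> additive_poly_len A"
  obtains Q where "additive_poly Q" "additive_poly (\<lambda>x. A x - B (Q x))"
    "additive_poly_len (\<lambda>x. A x - B (Q x)) < additive_poly_len A"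
proof -
  obtain t where t: "additive_poly_len B = Suc t"
    using additive_poly_len_eq_0_iff[OF B(1)] B(2) not0_implies_Suc by blast
  obtain Q R where Q: "additive_poly Q" and R: "additive_poly_below t R"
    and QR: "\<forall>x. A x = B (Q x) + R x"
    using additive_poly_division[OF B(1) t additive_poly_below_len[OF A]] by blast
  have "(\<lambda>x. A x - B (Q x)) = R"
    using QR by simp
  moreover have "additive_poly_len R < additive_poly_len A"
    using additive_poly_len_le[OF R] t len_le by simp
  ultimately show ?thesis
    using that Q additive_poly_below_imp_additive_poly[OF R] by simp
qed

text \<open>The Euclidean algorithm on a row: each transvection shortens one entry.\<close>
lemma row_reduction_exists:
  fixes r :: "'n::finite \<Rightarrow> 'k \<Rightarrow> 'k" and I :: "'n set"
  assumes "I \<noteq> {}"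
  shows "(\<And>i. additive_poly (r i)) \<Longrightarrow>
    \<exists>E i0 g. additive_automorphism E \<and> E ` coord_subspace I = coord_subspace I \<and> i0 \<in> I \<and>
      additive_poly g \<and> (\<forall>y\<in>coord_subspace I. (\<Sum>l\<in>UNIV. r l (E y $ l)) = g (y $ i0))"
proof (induction "\<Sum>i\<in>I. additive_poly_len (r i)" arbitrary: r rule: less_induct)
  case less
  show ?case
  proof (cases "\<exists>i\<in>I. \<exists>j\<in>I. i \<noteq> j \<and> r i \<noteq> (\<lambda>x. 0) \<and> r j \<noteq> (\<lambda>x. 0)")
    case True
    then obtain i j where ij: "i \<in> I" "j \<in> I" "i \<noteq> j" "r j \<noteq> (\<lambda>x. 0)"
      and len_le: "additive_poly_len (r j) \<le> additive_poly_len (r i)"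
      by (metis nat_le_linear)
    obtain Q where Q: "additive_poly Q" and r_i: "additive_poly (\<lambda>z. r i z - r j (Q z))"
      and shorter: "additive_poly_len (\<lambda>z. r i z - r j (Q z)) < additive_poly_len (r i)"
      using additive_poly_len_reduce[OF less.prems less.prems ij(4) len_le] by blast
    define r' where "r' = r(i := \<lambda>z. r i z - r j (Q z))"
    have r'_additive: "additive_poly (r' l)" for l
      using less.prems r_i by (simp add: r'_def)
    have "(\<Sum>l\<in>I. additive_poly_len (r' l)) < (\<Sum>l\<in>I. additive_poly_len (r l))"
      using ij(1) shorter by (intro sum_strict_mono_ex1) (auto simp: r'_def)
    then obtain E i0 g where E: "additive_automorphism E" "E ` coord_subspace I = coord_subspace I"
      and i0: "i0 \<in> I" and g: "additive_poly g"
      and row: "\<forall>y\<in>coord_subspace I. (\<Sum>l\<in>UNIV. r' l (E y $ l)) = g (y $ i0)"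
      using less.hyps r'_additive by blast
    let ?T = "transvection i j (\<lambda>z. - Q z)"
    have "additive_poly (\<lambda>z. - Q z)"
      using additive_poly_cmult[OF Q, of "- 1"] by simp
    then have T: "additive_automorphism ?T" "?T ` coord_subspace I = coord_subspace I"
      using ij by (simp_all add: additive_automorphism_transvection transvection_image_coord_subspace)
    show ?thesis
    proof (intro exI conjI)
      show "additive_automorphism (\<lambda>y. ?T (E y))"
        using T(1) E(1) by (rule additive_automorphism_compose[OF prime_char])
      show "(\<lambda>y. ?T (E y)) ` coord_subspace I = coord_subspace I"
        using T(2) E(2) by (metis image_image)
      show "\<forall>y\<in>coord_subspace I. (\<Sum>l\<in>UNIV. r l (?T (E y) $ l)) = g (y $ i0)"
        using row row_transvection[OF prime_char ij(3) less.prems] by (simp add: r'_def)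
    qed (use i0 g in auto)
  next
    case False
    then obtain i0 where i0: "i0 \<in> I" and others: "\<And>l. l \<in> I \<Longrightarrow> l \<noteq> i0 \<Longrightarrow> r l = (\<lambda>x. 0)"
      using \<open>I \<noteq> {}\<close> by blast
    have "(\<Sum>l\<in>UNIV. r l (y $ l)) = r i0 (y $ i0)" if "y \<in> coord_subspace I" for y
      using row_single_entry[OF prime_char less.prems i0 others that] .
    then show ?thesis
      using i0 less.prems additive_automorphism_id by fastforce
  qed
qed

lemma additive_map_row_reduction:
  fixes K :: "'k ^ 'n::finite \<Rightarrow> 'k ^ 'm" and I :: "'n set"
  assumes "additive_map K" "I \<noteq> {}"
  obtains E i0 g where "additive_automorphism E" "E ` coord_subspace I = coord_subspace I" "i0 \<in> I"
    "additive_poly g" "\<And>y. y \<in> coord_subspace I \<Longrightarrow> K (E y) $ j = g (y $ i0)"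
proof -
  obtain r where "\<And>j i. additive_poly (r j i)" "\<And>x j. K x $ j = (\<Sum>i\<in>UNIV. r j i (x $ i))"
    using additive_mapE[OF assms(1)] by blast
  then obtain E i0 g where "additive_automorphism E" "E ` coord_subspace I = coord_subspace I" "i0 \<in> I"
    "additive_poly g" "\<forall>y\<in>coord_subspace I. (\<Sum>i\<in>UNIV. r j i (E y $ i)) = g (y $ i0)"
    using row_reduction_exists[OF assms(2), of "r j"] by blast
  with that show ?thesis
    by (simp add: \<open>\<And>x j. K x $ j = (\<Sum>i\<in>UNIV. r j i (x $ i))\<close>)
qed

lemma pivot_image_eq:
  fixes K :: "'k ^ 'n::finite \<Rightarrow> 'k ^ 'm::finite"
  assumes K: "additive_map K" "inj_on K (coord_subspace I)"
    and into: "K ` coord_subspace I \<subseteq> coord_subspace J" and i0: "i0 \<in> I"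
    and row: "\<And>y. y \<in> coord_subspace I \<Longrightarrow> K y $ j = g (y $ i0)" and g: "additive_poly g"
    and smaller: "K ` coord_subspace (I - {i0}) = coord_subspace (J - {j})"
  shows "K ` coord_subspace I = coord_subspace J"
proof -
  have "g \<noteq> (\<lambda>x. 0)"
  proof
    assume "g = (\<lambda>x. 0)"
    then have "(1::'k) = 0"
      using pivot_injective[OF K(2) i0 into _ row, of 1] smaller by simp
    then show False
      by simp
  qed
  have "z \<in> K ` coord_subspace I" if z: "z \<in> coord_subspace J" for z
  proof -
    obtain a where a: "g a = z $ j"
      using additive_poly_surj[OF g \<open>g \<noteq> (\<lambda>x. 0)\<close>] by blast
    have y: "axis i0 a \<in> coord_subspace I"
      using i0 by (rule axis_in_coord_subspace)
    have "K (axis i0 a) \<in> coord_subspace J"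
      using into y by blast
    moreover have "(z - K (axis i0 a)) $ j = 0"
      using row[OF y] a by simp
    ultimately have "z - K (axis i0 a) \<in> coord_subspace (J - {j})"
      unfolding coord_subspace_remove using coord_subspace_diff[OF z] by blast
    then have "z - K (axis i0 a) \<in> K ` coord_subspace (I - {i0})"
      by (simp only: smaller)
    then obtain y' where y': "y' \<in> coord_subspace (I - {i0})" "K y' = z - K (axis i0 a)"
      by (metis imageE)
    have "K (y' + axis i0 a) = z"
      using additive_map_add[OF prime_char K(1)] y'(2) by simp
    moreover have "y' + axis i0 a \<in> coord_subspace I"
      using y'(1) y by (auto simp: coord_subspace_remove intro: coord_subspace_add)
    ultimately show ?thesis
      by (metis image_eqI)
  qed
  then show ?thesis
    using into by blast
qed

text \<open>The analogue of the Ax-Grothendieck theorem for additive maps between coordinate subspaces.\<close>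
lemma additive_map_image_coord_subspace:
  fixes K :: "'k ^ 'n::finite \<Rightarrow> 'k ^ 'm::finite" and I :: "'n set" and J :: "'m set"
  assumes "additive_map K" "card I = card J"
    and "K ` coord_subspace I \<subseteq> coord_subspace J" "inj_on K (coord_subspace I)"
  shows "K ` coord_subspace I = coord_subspace J"
  using assms
proof (induction "card I" arbitrary: I J K)
  case 0
  then have "I = {}" "J = {}"
    by (simp_all add: card_eq_0_iff)
  then show ?case
    using additive_map_0[OF prime_char "0.prems"(1)] by (simp add: coord_subspace_empty)
next
  case (Suc m)
  have "I \<noteq> {}" "J \<noteq> {}"
    using Suc.hyps(2) Suc.prems(2) by auto
  then obtain j where j: "j \<in> J"
    by blast
  obtain E i0 g where E: "additive_automorphism E" "E ` coord_subspace I = coord_subspace I"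
    and i0: "i0 \<in> I" and g: "additive_poly g"
    and row: "\<And>y. y \<in> coord_subspace I \<Longrightarrow> K (E y) $ j = g (y $ i0)"
    using additive_map_row_reduction[OF Suc.prems(1) \<open>I \<noteq> {}\<close>] by blast
  define K' where "K' = (\<lambda>y. K (E y))"
  have K': "additive_map K'" "inj_on K' (coord_subspace I)" "K' ` coord_subspace I = K ` coord_subspace I"
    unfolding K'_def using additive_map_compose_automorphism[OF prime_char Suc.prems(1,4) E] by simp_all
  have into: "K' ` coord_subspace I \<subseteq> coord_subspace J"
    using Suc.prems(3) K'(3) by simp
  have row': "\<And>y. y \<in> coord_subspace I \<Longrightarrow> K' y $ j = g (y $ i0)"
    using row by (simp add: K'_def)
  have "K' ` coord_subspace (I - {i0}) = coord_subspace (J - {j})"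
  proof (rule Suc.hyps(1))
    show "m = card (I - {i0})" "card (I - {i0}) = card (J - {j})"
      using Suc.hyps(2) Suc.prems(2) i0 j by simp_all
    show "K' ` coord_subspace (I - {i0}) \<subseteq> coord_subspace (J - {j})"
      using into row' additive_poly_apply_0[OF prime_char g] by (rule pivot_image_subset)
    show "inj_on K' (coord_subspace (I - {i0}))"
      using K'(2) by (rule inj_on_subset) (auto simp: coord_subspace_remove)
  qed (rule K'(1))
  then have "K' ` coord_subspace I = coord_subspace J"
    using pivot_image_eq[OF K'(1,2) into i0 row' g] by simp
  then show ?case
    using K'(3) by simp
qed

lemma coord_subspace_zero_row:
  fixes H :: "'k ^ 'n::finite \<Rightarrow> 'k ^ 'm::finite" and I :: "'n set" and D :: "'m set"
  assumes H: "additive_map H" "inj_on H (coord_subspace I)" "H ` coord_subspace I = coord_subspace D"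
    and "j \<in> D" "card I = card D"
  obtains E i0 where "additive_automorphism E" "E ` coord_subspace I = coord_subspace I" "i0 \<in> I"
    "{y \<in> coord_subspace I. H y $ j = 0} = E ` coord_subspace (I - {i0})"
proof -
  have "I \<noteq> {}"
    using \<open>j \<in> D\<close> \<open>card I = card D\<close> by auto
  then obtain E i0 g where E: "additive_automorphism E" "E ` coord_subspace I = coord_subspace I"
    and i0: "i0 \<in> I" and g: "additive_poly g"
    and row: "\<And>y. y \<in> coord_subspace I \<Longrightarrow> H (E y) $ j = g (y $ i0)"
    using additive_map_row_reduction[OF H(1)] by blast
  define H' where "H' = (\<lambda>y. H (E y))"
  have H': "additive_map H'" "inj_on H' (coord_subspace I)" "H' ` coord_subspace I = coord_subspace D"
    unfolding H'_def using additive_map_compose_automorphism[OF prime_char H(1,2) E] H(3) by simp_all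
  have row': "\<And>y. y \<in> coord_subspace I \<Longrightarrow> H' y $ j = g (y $ i0)"
    using row by (simp add: H'_def)
  have g0: "g 0 = 0"
    using additive_poly_apply_0[OF prime_char g] .
  have "H' ` coord_subspace (I - {i0}) = coord_subspace (D - {j})"
  proof (rule additive_map_image_coord_subspace[OF H'(1)])
    show "card (I - {i0}) = card (D - {j})"
      using \<open>card I = card D\<close> i0 \<open>j \<in> D\<close> by simp
    show "H' ` coord_subspace (I - {i0}) \<subseteq> coord_subspace (D - {j})"
      using H'(3) by (intro pivot_image_subset[OF _ row' g0]) simp
    show "inj_on H' (coord_subspace (I - {i0}))"
      using H'(2) by (rule inj_on_subset) (auto simp: coord_subspace_remove)
  qed
  then have g_inj: "g a = 0 \<Longrightarrow> a = 0" for a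
    using pivot_injective[OF H'(2) i0 _ _ row', of D a] H'(3) by simp
  have "{y \<in> coord_subspace I. H y $ j = 0} = {y \<in> E ` coord_subspace I. H y $ j = 0}"
    using E(2) by simp
  also have "\<dots> = E ` {y \<in> coord_subspace I. H (E y) $ j = 0}"
    by blast
  also have "{y \<in> coord_subspace I. H (E y) $ j = 0} = coord_subspace (I - {i0})"
    using row g_inj g0 by (auto simp: coord_subspace_remove)
  finally show ?thesis
    using that E i0 by blast
qed

lemma bij_additive_map_preimage_coord_subspace_remove:
  fixes G :: "'k ^ 'n::finite \<Rightarrow> 'k ^ 'n"
  assumes G: "additive_map G" "bij G"
    and P: "additive_automorphism P" and card: "card I = card D"
    and preimage: "P ` coord_subspace I = G -` coord_subspace D" and "j \<in> D"
  obtains P' I' where "additive_automorphism P'" "card I' = card (D - {j})"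
    "P' ` coord_subspace I' = G -` coord_subspace (D - {j})"
proof -
  define H where "H = (\<lambda>y. G (P y))"
  have "H ` coord_subspace I = G ` G -` coord_subspace D"
    unfolding H_def preimage[symmetric] by (simp add: image_image)
  also have "\<dots> = coord_subspace D"
    using bij_is_surj[OF G(2)] by (simp add: image_vimage_eq)
  finally have H_image: "H ` coord_subspace I = coord_subspace D" .
  have H: "additive_map H"
    using P unfolding H_def additive_automorphism_def
    by (intro additive_map_compose[OF prime_char G(1)]) simp
  have "inj H"
    using inj_compose[OF bij_is_inj[OF G(2)] additive_automorphism_inj[OF P]]
    by (simp add: H_def o_def)
  then have H_inj: "inj_on H (coord_subspace I)"
    by (rule inj_on_subset) simp
  obtain E i0 where E: "additive_automorphism E" "E ` coord_subspace I = coord_subspace I"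
    and i0: "i0 \<in> I" and kernel: "{y \<in> coord_subspace I. H y $ j = 0} = E ` coord_subspace (I - {i0})"
    by (rule coord_subspace_zero_row[OF H H_inj H_image \<open>j \<in> D\<close> card])
  have "(\<lambda>y. P (E y)) ` coord_subspace (I - {i0}) = P ` {y \<in> coord_subspace I. H y $ j = 0}"
    unfolding kernel by (simp add: image_image)
  also have "\<dots> = {x \<in> P ` coord_subspace I. G x $ j = 0}"
    unfolding H_def by blast
  also have "\<dots> = G -` coord_subspace (D - {j})"
    unfolding preimage by (auto simp: coord_subspace_remove)
  finally have "(\<lambda>y. P (E y)) ` coord_subspace (I - {i0}) = G -` coord_subspace (D - {j})" .
  moreover have "card (I - {i0}) = card (D - {j})"
    using card i0 \<open>j \<in> D\<close> by simp
  ultimately show ?thesis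
    using that[OF additive_automorphism_compose[OF prime_char P E(1)]] by blast
qed

lemma bij_additive_map_preimage_coord_subspace:
  fixes G :: "'k ^ 'n::finite \<Rightarrow> 'k ^ 'n"
  assumes G: "additive_map G" "bij G"
  obtains P I where "additive_automorphism P" "card I = card D"
    "P ` coord_subspace I = G -` coord_subspace D"
proof -
  have "\<exists>P I. additive_automorphism P \<and> card I = card (- J) \<and> P ` coord_subspace I = G -` coord_subspace (- J)"
    for J :: "'n set"
    using finite[of J]
  proof (induction J rule: finite_induct)
    case empty
    show ?case
      using additive_automorphism_id
      by (intro exI[of _ "\<lambda>x. x"] exI[of _ "UNIV :: 'n set"]) (simp add: coord_subspace_UNIV)
  next
    case (insert j J)
    then obtain P I where "additive_automorphism P" "card I = card (- J)"
      "P ` coord_subspace I = G -` coord_subspace (- J)"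
      by blast
    moreover have "j \<in> - J"
      using insert.hyps(2) by simp
    ultimately obtain P' I' where "additive_automorphism P'" "card I' = card (- J - {j})"
      "P' ` coord_subspace I' = G -` coord_subspace (- J - {j})"
      using bij_additive_map_preimage_coord_subspace_remove[OF G] by metis
    then show ?case
      unfolding Compl_insert by blast
  qed
  from this[of "- D"] show ?thesis
    using that by auto
qed

lemma additive_map_preimage_subspace_iso_affine_space:
  fixes f :: "'k::alg_closed_field ^ 'n::finite \<Rightarrow> 'k ^ 'n" and W :: "('k ^ 'n) set"
  assumes f: "additive_map f" "bij f" and W: "vec.subspace W" and dim: "CARD('d::finite) = vec.dim W"
  shows "iso_affine_space {x. f x \<in> W} TYPE('d)"
proof -
  obtain L :: "'k ^ 'n \<Rightarrow> 'k ^ 'n" and D where L: "Vector_Spaces.linear (*s) (*s) L" "bij L"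
    and card_D: "card D = vec.dim W" and LW: "L ` W = coord_subspace D"
    using linear_equiv_coord_subspace[OF W] by blast
  define G where "G = (\<lambda>x. L (f x))"
  have "additive_map G"
    unfolding G_def by (rule additive_map_compose[OF prime_char additive_map_linear[OF L(1)] f(1)])
  moreover have "bij G"
    using bij_comp[OF f(2) L(2)] by (simp add: G_def o_def)
  ultimately obtain P I where P: "additive_automorphism P" and card_I: "card I = card D"
    and preimage: "P ` coord_subspace I = G -` coord_subspace D"
    by (rule bij_additive_map_preimage_coord_subspace)
  have "{x. f x \<in> W} = G -` coord_subspace D"
    unfolding G_def LW[symmetric] vimage_def
    using inj_image_mem_iff[OF bij_is_inj[OF L(2)]] by simp
  also have "\<dots> = P ` coord_subspace I"
    by (rule preimage[symmetric])
  finally have "{x. f x \<in> W} = P ` coord_subspace I" .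
  moreover have "card I = CARD('d)"
    using card_I card_D dim by simp
  ultimately show ?thesis
    using iso_affine_space_additive_automorphism_image[OF P iso_affine_space_coord_subspace] by simp
qed

end

theorem lemma7p1:
  fixes p :: nat
    and a :: "'n::finite \<Rightarrow> 'n \<Rightarrow> nat \<Rightarrow> 'k::alg_closed_field"
    and N :: "'n \<Rightarrow> nat"
    and W :: "('k ^ 'n) set"
  assumes "prime p"
    and "CHAR('k) = p"
    and "finite_morphism (addpoly_map p a N)"
    and "bij (addpoly_map p a N)"
    and "vec.subspace W"
  shows "(vec.dim W = 0 \<longrightarrow> (\<exists>x0. {x. addpoly_map p a N x \<in> W} = {x0}))
       \<and> (CARD('d::finite) = vec.dim W \<longrightarrow> iso_affine_space {x. addpoly_map p a N x \<in> W} TYPE('d))"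
proof -
  let ?f = "addpoly_map p a N"
  have prime_char: "prime CHAR('k)"
    using assms(1,2) by simp
  have f: "additive_map ?f"
    using additive_map_addpoly_map[of a N] assms(2) by simp
  show ?thesis
  proof (intro conjI impI)
    assume "vec.dim W = 0"
    then have "W = {0}"
      using vec.dim_eq_0 vec.subspace_0[OF assms(5)] by blast
    moreover obtain x0 where "?f x0 = 0" "\<And>x. ?f x = 0 \<Longrightarrow> x = x0"
      using assms(4) unfolding bij_iff by metis
    ultimately show "\<exists>x0. {x. ?f x \<in> W} = {x0}"
      by blast
  next
    assume "CARD('d) = vec.dim W"
    then show "iso_affine_space {x. ?f x \<in> W} TYPE('d)"
      by (rule additive_map_preimage_subspace_iso_affine_space[OF prime_char f assms(4,5)])
  qed
qed

end
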